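(* Let $M$ be a smooth $2n$-dimensional manifold, $\pi:E\to M$ the bundle of almost-complex structures, $\theta_1=j^1_pS\in J^1\pi$, $\theta_0=S(p)$. For any two horizontal subspaces $H,\tilde H\subset\mathcal A_{\theta_1}$ one has $\omega_H-\omega_{\tilde H}\in\partial_{1,1}(g_{\theta_0}\otimes T_p^*M)$. Consequently the class $$\chi(\theta_1)=\omega_H+\partial_{1,1}(g_{\theta_0}\otimes T_p^*M)\in H^{0,2}(g_{\theta_0})$$ does not depend on the choice of the horizontal subspace $H$ of $\mathcal A_{\theta_1}$.
   Context: $\tau:TM\otimes T^*M\to M$ is the bundle of $(1,1)$-tensors, $E=\{\theta:\theta^2=-\mathrm{id}\}$, $\pi=\tau|_E$, $J^1\pi$ its $1$-jet bundle. For a vector field $X$, $X^{(0)}$ is the vector field on $TM\otimes T^*M$ generated by the natural lift of its flow (conjugation of $(1,1)$-tensors by the differential); in coordinates $X^{(0)}=X^i\partial_{x^i}+(\partial_sX^i\,u^s_j-u^i_s\,\partial_jX^s)\partial_{u^i_j}$. $\mathcal K_{\theta_1}$ is the tangent space at $\theta_0$ to the image of $S$; $\mathcal A_{\theta_1}=\{j^1_pX: X^{(0)}_{\theta_0}\in\mathcal K_{\theta_1}\}$, a subspace of the space $J^1_p\xi$ of $1$-jets at $p$ of vector fields; $\xi_{1,0}:J^1_p\xi\to T_pM$, $j^1_pX\mapsto X_p$. A $2n$-dimensional $H\subset\mathcal A_{\theta_1}$ is horizontal if $\xi_{1,0}|_H$ is an isomorphism onto $T_pM$. The bracket $[j^1_pX,j^1_pY]=[X,Y]_p$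 is a well-defined bilinear map $J^1_p\xi\times J^1_p\xi\to T_pM$, and $\omega_H\in T_pM\otimes\wedge^2T_p^*M$ is $\omega_H(X_p,Y_p)=[(\xi_{1,0}|_H)^{-1}X_p,(\xi_{1,0}|_H)^{-1}Y_p]$. $g_{\theta_0}=\{A\in\mathrm{End}(T_pM):A\theta_0=\theta_0A\}$; $\partial_{1,1}:g_{\theta_0}\otimes T_p^*M\to T_pM\otimes\wedge^2T_p^*M$, $\partial_{1,1}(h)(X,Y)=h(X)(Y)-h(Y)(X)$; $H^{0,2}(g_{\theta_0})=(T_pM\otimes\wedge^2T_p^*M)/\partial_{1,1}(g_{\theta_0}\otimes T_p^*M)$. *)

theory Defs
  imports "HOL-Analysis.Analysis"
begin

text \<open>Everything is pointwise at p, in a chart: T_pM = real^'n, (1,1)-tensors at p are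
  matrices real^'n^'n. A 1-jet at p of a vector field X is the pair (X p, DX p) where the
  matrix entry (DX p) $ i $ s is the partial derivative d_s X^i at p.\<close>

type_synonym 'n jet1 = "(real^'n) \<times> (real^'n^'n)"

definition xi10 :: "'n::finite jet1 \<Rightarrow> real^'n" where
  "xi10 j = fst j"

definition jet_bracket :: "'n::finite jet1 \<Rightarrow> 'n jet1 \<Rightarrow> real^'n" where
  "jet_bracket j k = (snd k *v fst j) - (snd j *v fst k)"

text \<open>X^(0) at theta0, in coordinates (x,u): (X^i, d_s X^i u^s_j - u^i_s d_j X^s)\<close>
definition natural_lift :: "real^'n^'n \<Rightarrow> 'n::finite jet1 \<Rightarrow> (real^'n) \<times> (real^'n^'n)" where
  "natural_lift \<theta>0 j = (fst j, snd j ** \<theta>0 - \<theta>0 ** snd j)"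

text \<open>K: tangent space at theta0 = S p of the image x |-> (x, S x) of the section S\<close>
definition K_space :: "(real^'n \<Rightarrow> real^'n^'n) \<Rightarrow> real^'n::finite \<Rightarrow> ((real^'n) \<times> (real^'n^'n)) set" where
  "K_space S p = range (\<lambda>v. (v, frechet_derivative S (at p) v))"

definition A_space :: "(real^'n \<Rightarrow> real^'n^'n) \<Rightarrow> real^'n::finite \<Rightarrow> 'n jet1 set" where
  "A_space S p = {j. natural_lift (S p) j \<in> K_space S p}"

definition horizontal :: "(real^'n \<Rightarrow> real^'n^'n) \<Rightarrow> real^'n::finite \<Rightarrow> 'n jet1 set \<Rightarrow> bool" where
  "horizontal S p H \<longleftrightarrow> subspace H \<and> H \<subseteq> A_space S p \<and> dim H = CARD('n)
      \<and> bij_betw xi10 H (UNIV :: (real^'n) set)"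

definition omega :: "'n::finite jet1 set \<Rightarrow> real^'n \<Rightarrow> real^'n \<Rightarrow> real^'n" where
  "omega H v w = jet_bracket (inv_into H xi10 v) (inv_into H xi10 w)"

text \<open>g_theta0 tensor T_p^*M: linear maps h from T_pM into g_theta0\<close>
definition g_tensor :: "real^'n^'n \<Rightarrow> (real^'n::finite \<Rightarrow> real^'n^'n) set" where
  "g_tensor \<theta>0 = {h. linear h \<and> (\<forall>v. h v ** \<theta>0 = \<theta>0 ** h v)}"

definition d11 :: "(real^'n::finite \<Rightarrow> real^'n^'n) \<Rightarrow> real^'n \<Rightarrow> real^'n \<Rightarrow> real^'n" where
  "d11 h X Y = h X *v Y - h Y *v X"

text \<open>The class in H^{0,2}: the coset omega + d11(g tensor T^*)\<close>
definition H02_class :: "real^'n^'n \<Rightarrow> (real^'n::finite \<Rightarrow> real^'n \<Rightarrow> real^'n)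
     \<Rightarrow> (real^'n \<Rightarrow> real^'n \<Rightarrow> real^'n) set" where
  "H02_class \<theta>0 \<omega> = {\<lambda>v w. \<omega> v w + d11 h v w | h. h \<in> g_tensor \<theta>0}"

end

theory Submission
  imports Defs
begin

text \<open>A horizontal subspace H is the graph of a linear map v \<mapsto> G_H v over T_pM, and membership
  in A forces the commutator [G_H v, \<theta>0] to equal the derivative of S in direction v, a quantity
  independent of H. So G_H' - G_H commutes with \<theta>0, i.e. lies in g_\<theta>0 \<otimes> T_p*M, and since
  \<omega>_H(v,w) = G_H w v - G_H v w, the difference \<omega>_H - \<omega>_H' is \<partial>_1,1(G_H' - G_H).\<close>

lemma matrix_add_rdistrib: "((A::real^'n::finite^'m::finite) + B) ** C = A ** C + B ** C"
  by (simp add: vec_eq_iff matrix_matrix_mult_def sum.distrib distrib_right)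

lemma matrix_diff_rdistrib: "((A::real^'n::finite^'m::finite) - B) ** C = A ** C - B ** C"
  by (simp add: vec_eq_iff matrix_matrix_mult_def sum_subtractf left_diff_distrib)

lemma matrix_diff_ldistrib: "(C::real^'n::finite^'m::finite) ** (A - B) = C ** A - C ** B"
  by (simp add: vec_eq_iff matrix_matrix_mult_def sum_subtractf right_diff_distrib)

definition horizontal_matrix :: "'n::finite jet1 set \<Rightarrow> real^'n \<Rightarrow> real^'n^'n" where
  "horizontal_matrix H v = snd (inv_into H xi10 v)"

lemma horizontal_inv_into:
  assumes "horizontal S p H"
  shows "inv_into H xi10 v \<in> H" "inv_into H xi10 v = (v, horizontal_matrix H v)"
proof -
  have bij: "bij_betw xi10 H UNIV" using assms unfolding horizontal_def by blast
  show "inv_into H xi10 v \<in> H"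
    using bij by (auto intro: inv_into_into simp: bij_betw_def)
  have "fst (inv_into H xi10 v) = v"
    using bij_betw_inv_into_right[OF bij] by (simp add: xi10_def)
  then show "inv_into H xi10 v = (v, horizontal_matrix H v)"
    unfolding horizontal_matrix_def by (metis prod.collapse)
qed

lemma linear_horizontal_matrix:
  assumes "horizontal S p H"
  shows "linear (horizontal_matrix H)"
proof -
  have sub: "subspace H" and inj: "inj_on xi10 H"
    using assms unfolding horizontal_def bij_betw_def by auto
  note lift = horizontal_inv_into[OF assms]
  have add: "inv_into H xi10 (v + w) = inv_into H xi10 v + inv_into H xi10 w" for v w
    by (rule inv_into_f_eq[OF inj]) (use subspace_add[OF sub lift(1) lift(1)] in \<open>auto simp: lift(2) xi10_def\<close>)
  have scale: "inv_into H xi10 (c *\<^sub>R v) = c *\<^sub>R inv_into H xi10 v" for c v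
    by (rule inv_into_f_eq[OF inj]) (use subspace_scale[OF sub lift(1)] in \<open>auto simp: lift(2) xi10_def\<close>)
  show ?thesis
    by (rule linearI) (simp_all add: horizontal_matrix_def add scale)
qed

lemma horizontal_matrix_commutator:
  assumes "horizontal S p H"
  shows "horizontal_matrix H v ** S p - S p ** horizontal_matrix H v
         = frechet_derivative S (at p) v"
proof -
  have "inv_into H xi10 v \<in> A_space S p"
    using horizontal_inv_into(1)[OF assms] assms unfolding horizontal_def by blast
  then show ?thesis
    unfolding A_space_def natural_lift_def K_space_def horizontal_inv_into(2)[OF assms] by auto
qed

lemma omega_horizontal_matrix:
  assumes "horizontal S p H"
  shows "omega H v w = horizontal_matrix H w *v v - horizontal_matrix H v *v w"
  unfolding omega_def jet_bracket_def horizontal_inv_into(2)[OF assms] by simp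

lemma horizontal_matrix_diff_in_g_tensor:
  assumes "horizontal S p H" and "horizontal S p H'"
  shows "(\<lambda>v. horizontal_matrix H' v - horizontal_matrix H v) \<in> g_tensor (S p)"
proof -
  have "(horizontal_matrix H' v - horizontal_matrix H v) ** S p
        = S p ** (horizontal_matrix H' v - horizontal_matrix H v)" for v
    using horizontal_matrix_commutator[OF assms(1), of v] horizontal_matrix_commutator[OF assms(2), of v]
    by (simp add: matrix_diff_rdistrib matrix_diff_ldistrib algebra_simps)
  then show ?thesis
    unfolding g_tensor_def
    using linear_horizontal_matrix[OF assms(1)] linear_horizontal_matrix[OF assms(2)]
    by (auto intro: linear_compose_sub)
qed

lemma omega_diff_eq_d11:
  assumes "horizontal S p H" and "horizontal S p H'"
  shows "\<exists>h\<in>g_tensor (S p). \<forall>v w. omega H v w - omega H' v w = d11 h v w"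
proof
  show "\<forall>v w. omega H v w - omega H' v w
          = d11 (\<lambda>v. horizontal_matrix H' v - horizontal_matrix H v) v w"
    by (simp add: omega_horizontal_matrix[OF assms(1)] omega_horizontal_matrix[OF assms(2)]
        d11_def matrix_vector_mult_diff_rdistrib)
qed (rule horizontal_matrix_diff_in_g_tensor[OF assms])

lemma g_tensor_add:
  "h \<in> g_tensor \<theta> \<Longrightarrow> k \<in> g_tensor \<theta> \<Longrightarrow> (\<lambda>v. h v + k v) \<in> g_tensor \<theta>"
  unfolding g_tensor_def
  by (auto intro: linear_compose_add simp: matrix_add_rdistrib matrix_add_ldistrib)

lemma d11_add: "d11 (\<lambda>v. h v + k v) v w = d11 h v w + d11 k v w"
  unfolding d11_def by (simp add: matrix_vector_mult_add_rdistrib)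

lemma H02_class_subset:
  assumes "h \<in> g_tensor \<theta>" and "\<forall>v w. \<omega> v w - \<omega>' v w = d11 h v w"
  shows "H02_class \<theta> \<omega> \<subseteq> H02_class \<theta> \<omega>'"
proof
  fix f assume "f \<in> H02_class \<theta> \<omega>"
  then obtain k where k: "k \<in> g_tensor \<theta>" and f: "f = (\<lambda>v w. \<omega> v w + d11 k v w)"
    unfolding H02_class_def by blast
  have "f = (\<lambda>v w. \<omega>' v w + d11 (\<lambda>v. h v + k v) v w)"
    unfolding f fun_eq_iff d11_add using assms(2) by (metis add.assoc diff_add_cancel add.commute)
  then show "f \<in> H02_class \<theta> \<omega>'"
    unfolding H02_class_def using g_tensor_add[OF assms(1) k] by blast
qed

theorem mainTheorem5:
  fixes S :: "real^'n::finite \<Rightarrow> real^'n^'n" and U :: "(real^'n) set" and p :: "real^'n"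
    and H H' :: "'n jet1 set"
  assumes "even CARD('n)"
    and "open U" and "p \<in> U"
    and "S differentiable_on U"
    and "\<forall>x\<in>U. S x ** S x = - mat 1"
    and "horizontal S p H" and "horizontal S p H'"
  shows "(\<exists>h\<in>g_tensor (S p). \<forall>v w. omega H v w - omega H' v w = d11 h v w)
       \<and> H02_class (S p) (omega H) = H02_class (S p) (omega H')"
proof -
  have "\<exists>h\<in>g_tensor (S p). \<forall>v w. omega H v w - omega H' v w = d11 h v w"
    using omega_diff_eq_d11[OF assms(6,7)] .
  moreover have "\<exists>h\<in>g_tensor (S p). \<forall>v w. omega H' v w - omega H v w = d11 h v w"
    using omega_diff_eq_d11[OF assms(7,6)] .
  ultimately show ?thesis
    using H02_class_subset by (metis subset_antisym)
qed

end
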